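(* Let $(X,V,v)$ be a measure space over a prering $V$ and $Y$ a Banach space. Let $G$ be the set of nonnegative $g\in L(v,\mathbb R)$ which are almost-everywhere limits of an increasing sequence of functions from $S(V,\mathbb R)$. A function $f:X\to Y$ belongs to $L(v,Y)$ if and only if there exist $s_n\in S(V,Y)$ and $g\in G$ such that $s_n(x)\to f(x)$ almost everywhere and $|s_n(x)|\le g(x)$ for all $n$ and almost all $x\in X$.
   Context: Measure space: $X$ a set, $V$ a prering of subsets of $X$ (i.e. $\emptyset\in V$ and for $A,B\in V$ the sets $A\cap B$, $A\setminus B$ are finite disjoint unions of members of $V$), and $v:V\to[0,\infty)$ countably additive. $S(V,Y)$ is the space of simple functions $h=\sum_{i=1}^k y_ic_{A_i}$ with $y_i\in Y$, $A_i\in V$ pairwise disjoint; $\int h\,dv=\sum y_iv(A_i)$, $\|h\|=\int|h|\,dv$. A set $A$ is null if for every $\varepsilon>0$ it is covered by countably many $A_t\in V$ with $\sum v(A_t)<\varepsilon$; "almost everywhere" means outside a null set. A basic sequence is $s_n=h_1+\dots+h_n$ with $h_n\in S(V,Y)$, $\|h_n\|\le M4^{-n}$. $L(v,Y)$ is the set of $f:X\to Y$ that are almost-everywhere limits of basic sequences, with $\int f\,dv=\lim\int s_n\,dv$. *)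

theory Defs
  imports "HOL-Analysis.Analysis"
begin

text \<open>The set X is the universe of the type 'a; subsets of X are elements of type 'a set.\<close>

definition prering :: "'a set set \<Rightarrow> bool" where
  "prering V \<longleftrightarrow> {} \<in> V \<and>
     (\<forall>A\<in>V. \<forall>B\<in>V.
        (\<exists>F. finite F \<and> F \<subseteq> V \<and> disjoint F \<and> A \<inter> B = \<Union>F) \<and>
        (\<exists>F. finite F \<and> F \<subseteq> V \<and> disjoint F \<and> A - B = \<Union>F))"

definition countably_additive_on :: "'a set set \<Rightarrow> ('a set \<Rightarrow> real) \<Rightarrow> bool" where
  "countably_additive_on V v \<longleftrightarrow>
     (\<forall>A :: nat \<Rightarrow> 'a set. range A \<subseteq> V \<longrightarrow> disjoint_family A \<longrightarrow> \<Union>(range A) \<in> V \<longrightarrow>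
        (\<lambda>n. v (A n)) sums v (\<Union>(range A)))"

definition measure_space_pr :: "'a set set \<Rightarrow> ('a set \<Rightarrow> real) \<Rightarrow> bool" where
  "measure_space_pr V v \<longleftrightarrow> prering V \<and> (\<forall>A\<in>V. 0 \<le> v A) \<and> countably_additive_on V v"

definition simple_rep :: "'a set set \<Rightarrow> ('a \<Rightarrow> 'b::real_normed_vector) \<Rightarrow> nat \<Rightarrow> (nat \<Rightarrow> 'b) \<Rightarrow> (nat \<Rightarrow> 'a set) \<Rightarrow> bool" where
  "simple_rep V h k y A \<longleftrightarrow> (\<forall>i<k. A i \<in> V) \<and>
     (\<forall>i<k. \<forall>j<k. i \<noteq> j \<longrightarrow> A i \<inter> A j = {}) \<and>
     h = (\<lambda>x. \<Sum>i<k. indicator (A i) x *\<^sub>R y i)"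

definition simple_funs :: "'a set set \<Rightarrow> ('a \<Rightarrow> 'b::real_normed_vector) set" where
  "simple_funs V = {h. \<exists>k y A. simple_rep V h k y A}"

text \<open>Integral of a simple function: sum_i y_i v(A_i) (independent of the representation).\<close>
definition simple_integral :: "'a set set \<Rightarrow> ('a set \<Rightarrow> real) \<Rightarrow> ('a \<Rightarrow> 'b::real_normed_vector) \<Rightarrow> 'b" where
  "simple_integral V v h = (SOME I. \<exists>k y A. simple_rep V h k y A \<and> I = (\<Sum>i<k. v (A i) *\<^sub>R y i))"

definition simple_norm :: "'a set set \<Rightarrow> ('a set \<Rightarrow> real) \<Rightarrow> ('a \<Rightarrow> 'b::real_normed_vector) \<Rightarrow> real" where
  "simple_norm V v h = simple_integral V v (\<lambda>x. norm (h x))"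

definition null_set :: "'a set set \<Rightarrow> ('a set \<Rightarrow> real) \<Rightarrow> 'a set \<Rightarrow> bool" where
  "null_set V v N \<longleftrightarrow> (\<forall>\<epsilon>>0. \<exists>A :: nat \<Rightarrow> 'a set. range A \<subseteq> V \<and> N \<subseteq> \<Union>(range A) \<and>
       summable (\<lambda>t. v (A t)) \<and> (\<Sum>t. v (A t)) < \<epsilon>)"

definition almost_everywhere :: "'a set set \<Rightarrow> ('a set \<Rightarrow> real) \<Rightarrow> ('a \<Rightarrow> bool) \<Rightarrow> bool" where
  "almost_everywhere V v P \<longleftrightarrow> (\<exists>N. null_set V v N \<and> (\<forall>x. x \<notin> N \<longrightarrow> P x))"

text \<open>Basic sequence (0-indexed): h n in S(V,Y), norm (h n) \<le> M / 4^n, s n = sum_{i\<le>n} h i.\<close>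
definition basic_increments :: "'a set set \<Rightarrow> ('a set \<Rightarrow> real) \<Rightarrow> (nat \<Rightarrow> 'a \<Rightarrow> 'b::real_normed_vector) \<Rightarrow> bool" where
  "basic_increments V v h \<longleftrightarrow> (\<forall>n. h n \<in> simple_funs V) \<and>
     (\<exists>M. \<forall>n. simple_norm V v (h n) \<le> M / 4 ^ n)"

definition L_space :: "'a set set \<Rightarrow> ('a set \<Rightarrow> real) \<Rightarrow> ('a \<Rightarrow> 'b::real_normed_vector) set" where
  "L_space V v = {f. \<exists>h. basic_increments V v h \<and>
     almost_everywhere V v (\<lambda>x. (\<lambda>n. \<Sum>i\<le>n. h i x) \<longlonglongrightarrow> f x)}"

definition G_set :: "'a set set \<Rightarrow> ('a set \<Rightarrow> real) \<Rightarrow> ('a \<Rightarrow> real) set" where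
  "G_set V v = {g. g \<in> L_space V v \<and> (\<forall>x. 0 \<le> g x) \<and>
     (\<exists>s :: nat \<Rightarrow> 'a \<Rightarrow> real. (\<forall>n. s n \<in> simple_funs V) \<and> (\<forall>n x. s n x \<le> s (Suc n) x) \<and>
        almost_everywhere V v (\<lambda>x. (\<lambda>n. s n x) \<longlonglongrightarrow> g x))}"

end

theory Submission
  imports Defs
begin

(* Proof idea. Both directions are reduced to Lebesgue integration with respect to a genuine
   measure extending v.

   (1) The finite disjoint unions of members of the prering V form a ring of sets; v extends
       additively and then countably additively to it, so Caratheodory's theorem yields a
       measure M on the universe agreeing with v on V. Null sets of (V, v) are M-null, and
       simple functions are M-integrable with the expected integral and L1-norm.
   (2) Simple functions are closed under sums, scalar multiples and pointwise norms (sums are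
       computed on the common refinement of two partitions of the universe).
   (3) For a basic sequence h, Chebyshev covers of the sets where |h n| > 2^-n show that the
       series of |h n| converges off a null set.
   (4) "=>": the partial sums of a basic sequence for f are dominated by the majorant
       Sum_n |h n|, which lies in G.
   (5) "<=": g is dominated by an integrable majorant of a basic sequence for g, so dominated
       convergence makes (s n) Cauchy in L1; a rapidly converging subsequence has increments
       forming a basic sequence converging to f. *)

definition fin_disj_in :: "'a set set \<Rightarrow> 'a set set \<Rightarrow> bool" where
  "fin_disj_in V F \<longleftrightarrow> finite F \<and> F \<subseteq> V \<and> disjoint F"

definition gen_ring :: "'a set set \<Rightarrow> 'a set set" where
  "gen_ring V = {\<Union>F | F. fin_disj_in V F}"

lemma prering_decomp:
  assumes "prering V" "a \<in> V" "b \<in> V"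
  shows "(\<exists>F. fin_disj_in V F \<and> a \<inter> b = \<Union>F) \<and> (\<exists>F. fin_disj_in V F \<and> a - b = \<Union>F)"
  using assms(1)[unfolded prering_def, THEN conjunct2, rule_format, OF assms(2,3)]
  unfolding fin_disj_in_def by simp

lemmas prering_Int_decomp = prering_decomp[THEN conjunct1]
lemmas prering_Diff_decomp = prering_decomp[THEN conjunct2]

lemma gen_ring_iff: "a \<in> gen_ring V \<longleftrightarrow> (\<exists>F. fin_disj_in V F \<and> a = \<Union>F)"
  unfolding gen_ring_def by auto

lemma gen_ring_basic: "a \<in> V \<Longrightarrow> a \<in> gen_ring V"
  unfolding gen_ring_iff fin_disj_in_def by (intro exI[of _ "{a}"]) (auto simp: disjoint_def)

lemma fin_disj_in_UN:
  assumes "finite I" "\<And>i. i \<in> I \<Longrightarrow> fin_disj_in V (F i)" "disjoint_family_on (\<lambda>i. \<Union>(F i)) I"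
  shows "fin_disj_in V (\<Union>i\<in>I. F i)"
  unfolding fin_disj_in_def
proof (intro conjI)
  show "finite (\<Union>i\<in>I. F i)" "(\<Union>i\<in>I. F i) \<subseteq> V"
    using assms(1,2) by (auto simp: fin_disj_in_def)
  show "disjoint (\<Union>i\<in>I. F i)"
  proof (rule disjointI)
    fix a b assume "a \<in> (\<Union>i\<in>I. F i)" "b \<in> (\<Union>i\<in>I. F i)" "a \<noteq> b"
    then obtain i j where ij: "i \<in> I" "a \<in> F i" "j \<in> I" "b \<in> F j" by blast
    show "a \<inter> b = {}"
    proof (cases "i = j")
      case True
      then show ?thesis using assms(2)[OF ij(1)] ij \<open>a \<noteq> b\<close> by (auto simp: fin_disj_in_def dest: disjointD)
    next
      case False
      then have "\<Union>(F i) \<inter> \<Union>(F j) = {}" using assms(3) ij unfolding disjoint_family_on_def by blast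
      then show ?thesis using ij by blast
    qed
  qed
qed

lemma disjoint_family_Sigma_snd:
  assumes "\<And>i. i \<in> I \<Longrightarrow> fin_disj_in V (F i)" "disjoint_family_on (\<lambda>i. \<Union>(F i)) I"
  shows "disjoint_family_on snd (Sigma I F)"
  unfolding disjoint_family_on_def
proof (intro ballI impI)
  fix p q assume p: "p \<in> Sigma I F" and q: "q \<in> Sigma I F" and pq: "p \<noteq> q"
  show "snd p \<inter> snd q = {}"
  proof (cases "fst p = fst q")
    case True
    then have "disjoint (F (fst p))" "snd p \<noteq> snd q" "snd p \<in> F (fst p)" "snd q \<in> F (fst p)"
      using assms(1) p q pq by (auto simp: fin_disj_in_def prod_eq_iff)
    then show ?thesis by (auto dest: disjointD)
  next
    case False
    moreover have "fst p \<in> I" "fst q \<in> I" using p q by auto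
    ultimately have "\<Union>(F (fst p)) \<inter> \<Union>(F (fst q)) = {}" using assms(2) unfolding disjoint_family_on_def by blast
    moreover have "snd p \<in> F (fst p)" "snd q \<in> F (fst q)" using p q by auto
    ultimately show ?thesis by blast
  qed
qed

lemma gen_ring_Diff_basic:
  assumes pr: "prering V" and x: "x \<in> gen_ring V" and g: "g \<in> V"
  shows "x - g \<in> gen_ring V"
proof -
  obtain F where F: "fin_disj_in V F" "x = \<Union>F" using x by (auto simp: gen_ring_iff)
  have "\<forall>c\<in>F. \<exists>G. fin_disj_in V G \<and> c - g = \<Union>G"
    using F(1) prering_Diff_decomp[OF pr _ g] by (auto simp: fin_disj_in_def)
  then obtain G where G: "\<And>c. c \<in> F \<Longrightarrow> fin_disj_in V (G c) \<and> c - g = \<Union>(G c)" by metis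
  have "fin_disj_in V (\<Union>c\<in>F. G c)"
  proof (rule fin_disj_in_UN)
    show "finite F" using F(1) by (simp add: fin_disj_in_def)
    show "fin_disj_in V (G c)" if "c \<in> F" for c using G[OF that] by simp
    show "disjoint_family_on (\<lambda>c. \<Union>(G c)) F"
      unfolding disjoint_family_on_def
    proof (intro ballI impI)
      fix c c' assume "c \<in> F" "c' \<in> F" "c \<noteq> c'"
      then have "c \<inter> c' = {}" using F(1) by (auto simp: fin_disj_in_def dest: disjointD)
      then show "\<Union>(G c) \<inter> \<Union>(G c') = {}" using G \<open>c \<in> F\<close> \<open>c' \<in> F\<close> by auto
    qed
  qed
  moreover have "x - g = \<Union>(\<Union>c\<in>F. G c)"
  proof -
    have "x - g = (\<Union>c\<in>F. c - g)" using F(2) by auto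
    then show ?thesis using G by auto
  qed
  ultimately show ?thesis unfolding gen_ring_iff by blast
qed

lemma gen_ring_Diff:
  assumes pr: "prering V" and a: "a \<in> gen_ring V" and b: "b \<in> gen_ring V"
  shows "a - b \<in> gen_ring V"
proof -
  obtain F where F: "fin_disj_in V F" "b = \<Union>F" using b by (auto simp: gen_ring_iff)
  have "finite F" "F \<subseteq> V" using F(1) by (auto simp: fin_disj_in_def)
  then have "a - \<Union>F \<in> gen_ring V"
  proof (induction F rule: finite_induct)
    case (insert c F)
    have "a - \<Union>(insert c F) = (a - \<Union>F) - c" by auto
    then show ?case using insert gen_ring_Diff_basic[OF pr, of "a - \<Union>F" c] by simp
  qed (simp add: a)
  then show ?thesis using F(2) by simp
qed

lemma gen_ring_Un:
  assumes pr: "prering V" and a: "a \<in> gen_ring V" and b: "b \<in> gen_ring V"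
  shows "a \<union> b \<in> gen_ring V"
proof -
  obtain F where F: "fin_disj_in V F" "a - b = \<Union>F" using gen_ring_Diff[OF assms] by (auto simp: gen_ring_iff)
  obtain G where G: "fin_disj_in V G" "b = \<Union>G" using b by (auto simp: gen_ring_iff)
  have "\<Union>F \<inter> \<Union>G = {}" using F(2) G(2) by auto
  then have "fin_disj_in V (F \<union> G)"
    using F(1) G(1) disjoint_union[of F G] unfolding fin_disj_in_def by simp
  moreover have "a \<union> b = \<Union>(F \<union> G)" using F(2) G(2) by auto
  ultimately show ?thesis unfolding gen_ring_iff by blast
qed

lemma ring_of_sets_gen_ring: "prering V \<Longrightarrow> ring_of_sets UNIV (gen_ring V)"
proof (rule ring_of_setsI)
  show "{} \<in> gen_ring V" unfolding gen_ring_iff fin_disj_in_def by (intro exI[of _ "{}"]) simp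
qed (auto intro: gen_ring_Un gen_ring_Diff)

(* Simple functions are handled through explicit sums of indicator terms, so the default simp
   rules that turn such sums into sums over filtered index sets are switched off. *)
declare sum_indicator_scaleR[simp del] sum_mult_indicator[simp del] sum_indicator_mult[simp del]

lemma indicator_sum_in:
  fixes w :: "'i \<Rightarrow> 'b::real_normed_vector"
  assumes "finite I" "disjoint_family_on S I" "j \<in> I" "x \<in> S j"
  shows "(\<Sum>i\<in>I. indicator (S i) x *\<^sub>R w i) = w j"
proof -
  have "(\<Sum>i\<in>I. indicator (S i) x *\<^sub>R w i) = indicator (S j) x *\<^sub>R w j + (\<Sum>i\<in>I - {j}. indicator (S i) x *\<^sub>R w i)"
    using assms(1,3) by (rule sum.remove)
  also have "(\<Sum>i\<in>I - {j}. indicator (S i) x *\<^sub>R w i) = 0"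
    using assms(2-4) by (intro sum.neutral) (auto simp: disjoint_family_on_def split: split_indicator)
  finally show ?thesis using assms(4) by simp
qed

lemma simple_rep_disjoint_family: "simple_rep V h k y A \<Longrightarrow> disjoint_family_on A {..<k}"
  unfolding simple_rep_def disjoint_family_on_def by auto

lemma simple_rep_at:
  assumes "simple_rep V h k y A" "j < k" "x \<in> A j"
  shows "h x = y j"
  using indicator_sum_in[OF _ simple_rep_disjoint_family[OF assms(1)]] assms
  by (simp add: simple_rep_def)

lemma simple_rep_outside:
  assumes "simple_rep V h k y A" "\<And>j. j < k \<Longrightarrow> x \<notin> A j"
  shows "h x = 0"
  using assms by (auto simp: simple_rep_def intro!: sum.neutral)

lemma simple_funs_finite_family:
  fixes w :: "'i \<Rightarrow> 'b::real_normed_vector"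
  assumes T: "finite T" and P: "\<And>t. t \<in> T \<Longrightarrow> P t \<in> V" and dj: "disjoint_family_on P T"
  shows "(\<lambda>x. \<Sum>t\<in>T. indicator (P t) x *\<^sub>R w t) \<in> simple_funs V"
proof -
  obtain e where e: "bij_betw e {..<card T} T"
    using ex_bij_betw_nat_finite[OF T] by (auto simp: atLeast0LessThan)
  have "simple_rep V (\<lambda>x. \<Sum>t\<in>T. indicator (P t) x *\<^sub>R w t) (card T) (w \<circ> e) (P \<circ> e)"
    unfolding simple_rep_def
  proof (intro conjI allI impI)
    show "(P \<circ> e) i \<in> V" if "i < card T" for i
      using that e P by (auto simp: bij_betw_def)
    show "(P \<circ> e) i \<inter> (P \<circ> e) j = {}" if "i < card T" "j < card T" "i \<noteq> j" for i j
    proof -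
      have "e i \<in> T" "e j \<in> T" "e i \<noteq> e j" using that e by (auto simp: bij_betw_def inj_on_def)
      then show ?thesis using dj by (auto simp: disjoint_family_on_def)
    qed
    show "(\<lambda>x. \<Sum>t\<in>T. indicator (P t) x *\<^sub>R w t) = (\<lambda>x. \<Sum>i<card T. indicator ((P \<circ> e) i) x *\<^sub>R (w \<circ> e) i)"
      by (rule ext, subst sum.reindex_bij_betw[OF e, symmetric]) simp
  qed
  then show ?thesis unfolding simple_funs_def by blast
qed

lemma simple_funs_ring_family:
  fixes y :: "'i \<Rightarrow> 'b::real_normed_vector"
  assumes I: "finite I" and S: "\<And>i. i \<in> I \<Longrightarrow> S i \<in> gen_ring V" and dj: "disjoint_family_on S I"
  shows "(\<lambda>x. \<Sum>i\<in>I. indicator (S i) x *\<^sub>R y i) \<in> simple_funs V"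
proof -
  have "\<forall>i\<in>I. \<exists>F. fin_disj_in V F \<and> S i = \<Union>F" using S by (simp add: gen_ring_iff)
  then obtain F where F: "\<And>i. i \<in> I \<Longrightarrow> fin_disj_in V (F i) \<and> S i = \<Union>(F i)" by metis
  have finF: "\<And>i. i \<in> I \<Longrightarrow> finite (F i)" using F by (simp add: fin_disj_in_def)
  have split: "(\<Sum>i\<in>I. indicator (S i) x *\<^sub>R y i) = (\<Sum>p\<in>Sigma I F. indicator (snd p) x *\<^sub>R y (fst p))" for x
  proof -
    have "indicator (S i) x *\<^sub>R y i = (\<Sum>c\<in>F i. indicator c x *\<^sub>R y i)" if i: "i \<in> I" for i
    proof -
      have "disjoint_family_on (\<lambda>c. c) (F i)"
        using F[OF i] unfolding fin_disj_in_def disjoint_family_on_def disjoint_def by auto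
      then have "(indicator (S i) x :: real) = (\<Sum>c\<in>F i. indicator c x)"
        using indicator_UN_disjoint[OF finF[OF i], of "\<lambda>c. c" x] F[OF i] by simp
      then show ?thesis by (simp add: scaleR_sum_left)
    qed
    then have "(\<Sum>i\<in>I. indicator (S i) x *\<^sub>R y i) = (\<Sum>i\<in>I. \<Sum>c\<in>F i. indicator c x *\<^sub>R y i)"
      by simp
    also have "\<dots> = (\<Sum>p\<in>Sigma I F. indicator (snd p) x *\<^sub>R y (fst p))"
      using I finF by (subst sum.Sigma) (auto simp: case_prod_beta)
    finally show ?thesis .
  qed
  have "(\<lambda>x. \<Sum>p\<in>Sigma I F. indicator (snd p) x *\<^sub>R y (fst p)) \<in> simple_funs V"
  proof (rule simple_funs_finite_family)
    show "finite (Sigma I F)" using I finF by auto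
    show "snd p \<in> V" if "p \<in> Sigma I F" for p
      using that F[of "fst p"] by (auto simp: fin_disj_in_def)
    show "disjoint_family_on snd (Sigma I F)"
      using F dj by (intro disjoint_family_Sigma_snd) (auto simp: disjoint_family_on_def)
  qed
  then show ?thesis using split by simp
qed

text \<open>Completing a representation: the cells \<open>A i\<close> (\<open>i < k\<close>) together with the complement
  of their union form a partition of the universe indexed by \<open>nat option\<close>; the new cell
  \<open>None\<close> carries the value 0. Sums of simple functions are computed on the common refinement
  of two such partitions.\<close>

definition completed_cell :: "nat \<Rightarrow> (nat \<Rightarrow> 'a set) \<Rightarrow> nat option \<Rightarrow> 'a set" where
  "completed_cell k A a = (case a of Some i \<Rightarrow> A i | None \<Rightarrow> - (\<Union>i<k. A i))"

definition completed_value :: "(nat \<Rightarrow> 'b::zero) \<Rightarrow> nat option \<Rightarrow> 'b" where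
  "completed_value y a = (case a of Some i \<Rightarrow> y i | None \<Rightarrow> 0)"

definition completed_index :: "nat \<Rightarrow> nat option set" where
  "completed_index k = insert None (Some ` {..<k})"

lemma completed_partition:
  assumes rep: "simple_rep V h k y A"
  shows "disjoint_family_on (completed_cell k A) (completed_index k)"
    and "(\<Sum>a\<in>completed_index k. indicator (completed_cell k A a) x) = (1::real)"
    and "h x = (\<Sum>a\<in>completed_index k. indicator (completed_cell k A a) x *\<^sub>R completed_value y a)"
proof -
  show dj: "disjoint_family_on (completed_cell k A) (completed_index k)"
    using simple_rep_disjoint_family[OF rep]
    by (auto simp: disjoint_family_on_def completed_cell_def completed_index_def split: option.splits)
  have "(\<Union>a\<in>completed_index k. completed_cell k A a) = UNIV"
    by (auto simp: completed_cell_def completed_index_def)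
  then show "(\<Sum>a\<in>completed_index k. indicator (completed_cell k A a) x) = (1::real)"
    using indicator_UN_disjoint[OF _ dj, of x] by (simp add: completed_index_def)
  show "h x = (\<Sum>a\<in>completed_index k. indicator (completed_cell k A a) x *\<^sub>R completed_value y a)"
    using rep by (simp add: simple_rep_def completed_index_def sum.reindex completed_cell_def completed_value_def)
qed

lemma completed_refinement_sum:
  fixes h g :: "'a \<Rightarrow> 'b::real_normed_vector"
  assumes rh: "simple_rep V h k y A" and rg: "simple_rep V g l z B"
  shows "h x + g x = (\<Sum>p\<in>completed_index k \<times> completed_index l - {(None, None)}.
    indicator (completed_cell k A (fst p) \<inter> completed_cell l B (snd p)) x *\<^sub>R
      (completed_value y (fst p) + completed_value z (snd p)))"
proof -
  let ?I = "completed_index k" and ?K = "completed_index l"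
  let ?P = "\<lambda>a. indicator (completed_cell k A a) x :: real"
  let ?Q = "\<lambda>b. indicator (completed_cell l B b) x :: real"
  have "(\<Sum>p\<in>?I \<times> ?K. indicator (completed_cell k A (fst p) \<inter> completed_cell l B (snd p)) x *\<^sub>R
      (completed_value y (fst p) + completed_value z (snd p)))
      = (\<Sum>a\<in>?I. \<Sum>b\<in>?K. (?P a * ?Q b) *\<^sub>R completed_value y a)
        + (\<Sum>a\<in>?I. \<Sum>b\<in>?K. (?P a * ?Q b) *\<^sub>R completed_value z b)"
    by (simp add: sum.cartesian_product indicator_inter_arith split_def scaleR_add_right sum.distrib)
  also have "(\<Sum>a\<in>?I. \<Sum>b\<in>?K. (?P a * ?Q b) *\<^sub>R completed_value y a) = h x"
    using completed_partition(2,3)[OF rh, of x] completed_partition(2)[OF rg, of x]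
    by (simp add: sum_distrib_left[symmetric] scaleR_sum_left[symmetric])
  also have "(\<Sum>a\<in>?I. \<Sum>b\<in>?K. (?P a * ?Q b) *\<^sub>R completed_value z b) = g x"
    using completed_partition(2)[OF rh, of x] completed_partition(2,3)[OF rg, of x]
    by (subst sum.swap) (simp add: sum_distrib_right[symmetric] scaleR_sum_left[symmetric])
  finally show ?thesis
    by (simp add: sum_diff1 completed_index_def completed_value_def)
qed

lemma completed_refinement_cells:
  assumes pr: "prering V" and rh: "simple_rep V h k y A" and rg: "simple_rep V g l z B"
    and p: "p \<in> completed_index k \<times> completed_index l - {(None, None)}"
  shows "completed_cell k A (fst p) \<inter> completed_cell l B (snd p) \<in> gen_ring V"
proof -
  interpret R: ring_of_sets UNIV "gen_ring V" by (rule ring_of_sets_gen_ring[OF pr])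
  have AV: "A i \<in> gen_ring V" if "i < k" for i using rh that by (auto simp: simple_rep_def intro: gen_ring_basic)
  have BV: "B j \<in> gen_ring V" if "j < l" for j using rg that by (auto simp: simple_rep_def intro: gen_ring_basic)
  have UA: "(\<Union>i<k. A i) \<in> gen_ring V" and UB: "(\<Union>j<l. B j) \<in> gen_ring V" using AV BV by auto
  consider (both) i j where "p = (Some i, Some j)" "i < k" "j < l"
    | (left) i where "p = (Some i, None)" "i < k"
    | (right) j where "p = (None, Some j)" "j < l"
    using p by (cases p) (auto simp: completed_index_def)
  then show ?thesis
  proof cases
    case both
    then show ?thesis using AV BV by (auto simp: completed_cell_def)
  next
    case left
    then have "completed_cell k A (fst p) \<inter> completed_cell l B (snd p) = A i - (\<Union>j<l. B j)"
      by (auto simp: completed_cell_def)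
    then show ?thesis using AV[OF left(2)] UB by auto
  next
    case right
    then have "completed_cell k A (fst p) \<inter> completed_cell l B (snd p) = B j - (\<Union>i<k. A i)"
      by (auto simp: completed_cell_def)
    then show ?thesis using BV[OF right(2)] UA by auto
  qed
qed

lemma simple_funs_add:
  fixes h g :: "'a \<Rightarrow> 'b::real_normed_vector"
  assumes pr: "prering V" and h: "h \<in> simple_funs V" and g: "g \<in> simple_funs V"
  shows "(\<lambda>x. h x + g x) \<in> simple_funs V"
proof -
  obtain k y A where rh: "simple_rep V h k y A" using h by (auto simp: simple_funs_def)
  obtain l z B where rg: "simple_rep V g l z B" using g by (auto simp: simple_funs_def)
  show ?thesis
    unfolding completed_refinement_sum[OF rh rg]
  proof (rule simple_funs_ring_family)
    show "finite (completed_index k \<times> completed_index l - {(None, None)})"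
      by (simp add: completed_index_def)
    show "disjoint_family_on (\<lambda>p. completed_cell k A (fst p) \<inter> completed_cell l B (snd p))
        (completed_index k \<times> completed_index l - {(None, None)})"
      using completed_partition(1)[OF rh] completed_partition(1)[OF rg]
      unfolding disjoint_family_on_def by (auto simp: prod_eq_iff) blast+
  qed (rule completed_refinement_cells[OF pr rh rg])
qed

lemma simple_funs_scale:
  fixes h :: "'a \<Rightarrow> 'b::real_normed_vector"
  assumes "h \<in> simple_funs V"
  shows "(\<lambda>x. c *\<^sub>R h x) \<in> simple_funs V"
proof -
  obtain k y A where "simple_rep V h k y A" using assms unfolding simple_funs_def by blast
  then have "simple_rep V (\<lambda>x. c *\<^sub>R h x) k (\<lambda>i. c *\<^sub>R y i) A"
    unfolding simple_rep_def by (auto simp: scaleR_sum_right mult.commute)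
  then show ?thesis unfolding simple_funs_def by blast
qed

lemma simple_funs_diff:
  fixes h g :: "'a \<Rightarrow> 'b::real_normed_vector"
  assumes "prering V" "h \<in> simple_funs V" "g \<in> simple_funs V"
  shows "(\<lambda>x. h x - g x) \<in> simple_funs V"
  using simple_funs_add[OF assms(1,2) simple_funs_scale[OF assms(3), of "-1"]] by simp

lemma simple_funs_partial_sum:
  fixes h :: "nat \<Rightarrow> 'a \<Rightarrow> 'b::real_normed_vector"
  assumes "prering V" "\<And>i. h i \<in> simple_funs V"
  shows "(\<lambda>x. \<Sum>i\<le>n. h i x) \<in> simple_funs V"
  by (induction n) (use assms simple_funs_add[OF assms(1)] in auto)

lemma simple_rep_norm:
  fixes h :: "'a \<Rightarrow> 'b::real_normed_vector"
  assumes rep: "simple_rep V h k y A"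
  shows "simple_rep V (\<lambda>x. norm (h x)) k (\<lambda>i. norm (y i)) A"
proof -
  have "norm (h x) = (\<Sum>i<k. indicator (A i) x *\<^sub>R norm (y i))" for x
  proof (cases "\<exists>j<k. x \<in> A j")
    case True
    then obtain j where j: "j < k" "x \<in> A j" by blast
    have "(\<Sum>i<k. indicator (A i) x *\<^sub>R norm (y i)) = norm (y j)"
      by (rule indicator_sum_in[OF _ simple_rep_disjoint_family[OF rep]]) (use j in auto)
    then show ?thesis using simple_rep_at[OF rep j] by simp
  next
    case False
    then show ?thesis using simple_rep_outside[OF rep] by (auto intro!: sum.neutral)
  qed
  then show ?thesis using rep unfolding simple_rep_def by auto
qed

lemma simple_funs_norm:
  fixes h :: "'a \<Rightarrow> 'b::real_normed_vector"
  shows "h \<in> simple_funs V \<Longrightarrow> (\<lambda>x. norm (h x)) \<in> simple_funs V"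
  using simple_rep_norm unfolding simple_funs_def by blast

lemma ms_prering: "measure_space_pr V v \<Longrightarrow> prering V"
  by (simp add: measure_space_pr_def)

lemma ms_nonneg: "measure_space_pr V v \<Longrightarrow> a \<in> V \<Longrightarrow> 0 \<le> v a"
  by (simp add: measure_space_pr_def)

lemma ms_countably_additive:
  assumes "measure_space_pr V v" "range A \<subseteq> V" "disjoint_family A" "(\<Union>n. A n) \<in> V"
  shows "(\<lambda>n. v (A n)) sums v (\<Union>n. A n)"
  using assms unfolding measure_space_pr_def countably_additive_on_def by blast

lemma ms_empty:
  assumes ms: "measure_space_pr V v"
  shows "{} \<in> V" and "v {} = 0"
proof -
  show "{} \<in> V" using ms_prering[OF ms] by (simp add: prering_def)
  then have "(\<lambda>n. v {}) sums v {}"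
    using ms_countably_additive[OF ms, of "\<lambda>_. {}"] by (simp add: disjoint_family_on_def)
  then show "v {} = 0" by (simp add: sums_iff summable_const_iff)
qed

text \<open>A finite disjoint family in \<open>V\<close>, padded with empty sets, is a disjoint sequence in \<open>V\<close>
  whose \<open>v\<close>-series is the finite sum; this is how countable additivity is brought to bear on
  finite families.\<close>

lemma finite_family_as_sequence:
  assumes ms: "measure_space_pr V v" and I: "finite I" and G: "\<And>i. i \<in> I \<Longrightarrow> G i \<in> V"
    and dj: "disjoint_family_on G I"
  obtains E where "range E \<subseteq> V" "disjoint_family E" "(\<Union>n. E n) = (\<Union>i\<in>I. G i)"
    "(\<lambda>n. v (E n)) sums (\<Sum>i\<in>I. v (G i))"
proof -
  obtain e where e: "bij_betw e {..<card I} I"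
    using ex_bij_betw_nat_finite[OF I] by (auto simp: atLeast0LessThan)
  then have eI: "e ` {..<card I} = I" "inj_on e {..<card I}" by (auto simp: bij_betw_def)
  define E where "E n = (if n < card I then G (e n) else {})" for n
  have "range E \<subseteq> V" using G eI ms_empty[OF ms] by (auto simp: E_def)
  moreover have "disjoint_family E"
    unfolding disjoint_family_on_def
  proof (intro ballI impI)
    fix m n :: nat assume "m \<noteq> n"
    show "E m \<inter> E n = {}"
    proof (cases "m < card I \<and> n < card I")
      case True
      then have "e m \<noteq> e n" "e m \<in> I" "e n \<in> I" using eI \<open>m \<noteq> n\<close> by (auto simp: inj_on_def)
      then show ?thesis using dj True by (auto simp: E_def disjoint_family_on_def)
    qed (auto simp: E_def)
  qed
  moreover have "(\<Union>n. E n) = (\<Union>i\<in>I. G i)"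
  proof -
    have "(\<Union>n. E n) = (\<Union>n<card I. G (e n))" by (auto simp: E_def split: if_splits)
    also have "\<dots> = (\<Union>i\<in>e ` {..<card I}. G i)" by simp
    finally show ?thesis using eI(1) by simp
  qed
  moreover have "(\<lambda>n. v (E n)) sums (\<Sum>i\<in>I. v (G i))"
  proof -
    have "(\<lambda>n. v (E n)) sums (\<Sum>n<card I. v (E n))"
      by (rule sums_finite) (auto simp: E_def ms_empty[OF ms])
    moreover have "(\<Sum>n<card I. v (E n)) = (\<Sum>i\<in>I. v (G i))"
      using sum.reindex_bij_betw[OF e, of "\<lambda>i. v (G i)"] by (simp add: E_def)
    ultimately show ?thesis by simp
  qed
  ultimately show ?thesis by (rule that)
qed

lemma v_finite_additive:
  assumes ms: "measure_space_pr V v" and I: "finite I" and G: "\<And>i. i \<in> I \<Longrightarrow> G i \<in> V"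
    and dj: "disjoint_family_on G I" and U: "(\<Union>i\<in>I. G i) \<in> V"
  shows "v (\<Union>i\<in>I. G i) = (\<Sum>i\<in>I. v (G i))"
proof -
  obtain E where E: "range E \<subseteq> V" "disjoint_family E" "(\<Union>n. E n) = (\<Union>i\<in>I. G i)"
    "(\<lambda>n. v (E n)) sums (\<Sum>i\<in>I. v (G i))"
    using finite_family_as_sequence[OF ms I G dj] by blast
  have "(\<lambda>n. v (E n)) sums v (\<Union>i\<in>I. G i)"
    using ms_countably_additive[OF ms E(1,2)] E(3) U by simp
  then show ?thesis using E(4) by (simp add: sums_unique2)
qed

lemma v_refinement_sum:
  assumes ms: "measure_space_pr V v" and C: "fin_disj_in V C" and a: "a \<in> V" "a \<subseteq> \<Union>C"
    and H: "\<And>c. c \<in> C \<Longrightarrow> fin_disj_in V (H c) \<and> c \<inter> a = \<Union>(H c)"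
  shows "v a = (\<Sum>c\<in>C. \<Sum>e\<in>H c. v e)"
proof -
  have finC: "finite C" using C by (simp add: fin_disj_in_def)
  have finI: "finite (Sigma C H)" using finC H by (auto simp: fin_disj_in_def)
  have "disjoint_family_on (\<lambda>c. \<Union>(H c)) C"
    unfolding disjoint_family_on_def
  proof (intro ballI impI)
    fix c c' assume "c \<in> C" "c' \<in> C" "c \<noteq> c'"
    then have "c \<inter> c' = {}" using C by (auto simp: fin_disj_in_def dest: disjointD)
    then show "\<Union>(H c) \<inter> \<Union>(H c') = {}" using H[OF \<open>c \<in> C\<close>] H[OF \<open>c' \<in> C\<close>] by auto
  qed
  then have dj: "disjoint_family_on snd (Sigma C H)"
    using H by (intro disjoint_family_Sigma_snd) auto
  have HV: "snd p \<in> V" if "p \<in> Sigma C H" for p using that H[of "fst p"] by (auto simp: fin_disj_in_def)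
  have "(\<Union>p\<in>Sigma C H. snd p) = (\<Union>c\<in>C. c \<inter> a)" using H by force
  also have "\<dots> = a" using a(2) by auto
  finally have un: "(\<Union>p\<in>Sigma C H. snd p) = a" .
  have "v a = (\<Sum>p\<in>Sigma C H. v (snd p))"
    using v_finite_additive[OF ms finI HV dj] un a(1) by simp
  also have "\<dots> = (\<Sum>c\<in>C. \<Sum>e\<in>H c. v e)"
    using finC H by (subst sum.Sigma) (auto simp: fin_disj_in_def case_prod_beta)
  finally show ?thesis .
qed

text \<open>Two finite disjoint decompositions of the same set have the same total \<open>v\<close>-mass; the
  proof refines both into the pieces of the pairwise intersections.\<close>

lemma decomposition_sum_unique:
  assumes ms: "measure_space_pr V v" and C: "fin_disj_in V C" and D: "fin_disj_in V D"
    and eq: "\<Union>C = \<Union>D"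
  shows "(\<Sum>c\<in>C. v c) = (\<Sum>d\<in>D. v d)"
proof -
  have CV: "C \<subseteq> V" and DV: "D \<subseteq> V" using C D by (auto simp: fin_disj_in_def)
  have "\<forall>p\<in>C \<times> D. \<exists>E. fin_disj_in V E \<and> fst p \<inter> snd p = \<Union>E"
  proof
    fix p assume "p \<in> C \<times> D"
    then have "fst p \<in> V" "snd p \<in> V" using CV DV by auto
    then show "\<exists>E. fin_disj_in V E \<and> fst p \<inter> snd p = \<Union>E" by (rule prering_Int_decomp[OF ms_prering[OF ms]])
  qed
  from bchoice[OF this] obtain E0
    where "\<forall>p\<in>C \<times> D. fin_disj_in V (E0 p) \<and> fst p \<inter> snd p = \<Union>(E0 p)" ..
  then obtain E where E: "\<And>c d. c \<in> C \<Longrightarrow> d \<in> D \<Longrightarrow> fin_disj_in V (E c d) \<and> c \<inter> d = \<Union>(E c d)"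
    by (intro that[of "\<lambda>c d. E0 (c, d)"]) auto
  have vD: "v d = (\<Sum>c\<in>C. \<Sum>e\<in>E c d. v e)" if d: "d \<in> D" for d
  proof (rule v_refinement_sum[OF ms C])
    show "d \<in> V" "d \<subseteq> \<Union>C" using d DV eq by auto
    show "fin_disj_in V (E c d) \<and> c \<inter> d = \<Union>(E c d)" if "c \<in> C" for c using E[OF that d] .
  qed
  have vC: "v c = (\<Sum>d\<in>D. \<Sum>e\<in>E c d. v e)" if c: "c \<in> C" for c
  proof (rule v_refinement_sum[OF ms D])
    show "c \<in> V" "c \<subseteq> \<Union>D" using c CV eq by auto
    show "fin_disj_in V (E c d) \<and> d \<inter> c = \<Union>(E c d)" if "d \<in> D" for d
      using E[OF c that] by (simp add: Int_commute)
  qed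
  have "(\<Sum>c\<in>C. v c) = (\<Sum>c\<in>C. \<Sum>d\<in>D. \<Sum>e\<in>E c d. v e)" using vC by simp
  also have "\<dots> = (\<Sum>d\<in>D. \<Sum>c\<in>C. \<Sum>e\<in>E c d. v e)" by (rule sum.swap)
  also have "\<dots> = (\<Sum>d\<in>D. v d)" using vD by simp
  finally show ?thesis .
qed

text \<open>The extension of \<open>v\<close> to the generated ring, well defined by the previous lemma.\<close>

definition ring_measure :: "'a set set \<Rightarrow> ('a set \<Rightarrow> real) \<Rightarrow> 'a set \<Rightarrow> real" where
  "ring_measure V v a = (\<Sum>c\<in>(SOME F. fin_disj_in V F \<and> a = \<Union>F). v c)"

lemma ring_measure_decomp:
  assumes ms: "measure_space_pr V v" and F: "fin_disj_in V F"
  shows "ring_measure V v (\<Union>F) = (\<Sum>c\<in>F. v c)"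
proof -
  define G where "G = (SOME G. fin_disj_in V G \<and> \<Union>F = \<Union>G)"
  have G: "fin_disj_in V G \<and> \<Union>F = \<Union>G" unfolding G_def by (rule someI_ex) (use F in blast)
  have "ring_measure V v (\<Union>F) = (\<Sum>c\<in>G. v c)" unfolding ring_measure_def G_def ..
  also have "\<dots> = (\<Sum>c\<in>F. v c)" using decomposition_sum_unique[OF ms _ F] G by simp
  finally show ?thesis .
qed

lemma ring_measure_basic:
  assumes "measure_space_pr V v" "a \<in> V"
  shows "ring_measure V v a = v a"
  using ring_measure_decomp[OF assms(1), of "{a}"] assms(2) by (simp add: fin_disj_in_def)

lemma ring_measure_nonneg:
  assumes ms: "measure_space_pr V v" and a: "a \<in> gen_ring V"
  shows "0 \<le> ring_measure V v a"
proof -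
  obtain F where F: "fin_disj_in V F" "a = \<Union>F" using a by (auto simp: gen_ring_iff)
  then show ?thesis
    using ring_measure_decomp[OF ms F(1)] ms_nonneg[OF ms] by (auto simp: fin_disj_in_def intro!: sum_nonneg)
qed

lemma ring_measure_Un:
  assumes ms: "measure_space_pr V v" and x: "x \<in> gen_ring V" and y: "y \<in> gen_ring V" and dj: "x \<inter> y = {}"
  shows "ring_measure V v (x \<union> y) = ring_measure V v x + ring_measure V v y"
proof -
  obtain F where F: "fin_disj_in V F" "x = \<Union>F" using x by (auto simp: gen_ring_iff)
  obtain G where G: "fin_disj_in V G" "y = \<Union>G" using y by (auto simp: gen_ring_iff)
  have "\<Union>F \<inter> \<Union>G = {}" using F G dj by simp
  then have FG: "fin_disj_in V (F \<union> G)"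
    using F(1) G(1) disjoint_union[of F G] unfolding fin_disj_in_def by simp
  have "F \<inter> G \<subseteq> {{}}" using F G dj by auto
  then have "(\<Sum>c\<in>F \<inter> G. v c) = 0" using ms_empty(2)[OF ms] by (intro sum.neutral) auto
  moreover have "finite F" "finite G" using F G by (auto simp: fin_disj_in_def)
  ultimately have sum_FG: "(\<Sum>c\<in>F \<union> G. v c) = (\<Sum>c\<in>F. v c) + (\<Sum>c\<in>G. v c)"
    using sum.union_inter[of F G v] by simp
  have "ring_measure V v (x \<union> y) = ring_measure V v (\<Union>(F \<union> G))" using F(2) G(2) by simp
  also have "\<dots> = (\<Sum>c\<in>F \<union> G. v c)" by (rule ring_measure_decomp[OF ms FG])
  finally show ?thesis
    using sum_FG ring_measure_decomp[OF ms F(1)] ring_measure_decomp[OF ms G(1)] F(2) G(2) by simp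
qed

lemma ring_measure_finite_UN:
  assumes ms: "measure_space_pr V v" and I: "finite I" and S: "\<And>i. i \<in> I \<Longrightarrow> S i \<in> gen_ring V"
    and dj: "disjoint_family_on S I"
  shows "ring_measure V v (\<Union>i\<in>I. S i) = (\<Sum>i\<in>I. ring_measure V v (S i))"
  using I S dj
proof (induction I rule: finite_induct)
  case empty
  then show ?case using ring_measure_basic[OF ms] ms_empty[OF ms] by simp
next
  case (insert i I)
  interpret R: ring_of_sets UNIV "gen_ring V" by (rule ring_of_sets_gen_ring[OF ms_prering[OF ms]])
  have djI: "disjoint_family_on S I" using insert.prems(2) disjoint_family_on_mono by blast
  have "(\<Union>j\<in>I. S j) \<in> gen_ring V" using insert by auto
  moreover have "S i \<inter> (\<Union>j\<in>I. S j) = {}" using insert.hyps(2) insert.prems(2) by (auto simp: disjoint_family_on_def)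
  ultimately show ?case using ring_measure_Un[OF ms, of "S i"] insert by (simp add: djI)
qed

lemma gen_ring_as_sequence:
  assumes ms: "measure_space_pr V v" and D: "D \<in> gen_ring V"
  obtains E where "range E \<subseteq> V" "disjoint_family E" "(\<Union>i. E i) = D"
    "(\<lambda>i. v (E i)) sums ring_measure V v D"
proof -
  obtain F where F: "fin_disj_in V F" "D = \<Union>F" using D by (auto simp: gen_ring_iff)
  have "disjoint_family_on (\<lambda>c. c) F"
    using F(1) by (auto simp: fin_disj_in_def disjoint_family_on_def dest: disjointD)
  then obtain E where "range E \<subseteq> V" "disjoint_family E" "(\<Union>i. E i) = \<Union>F"
      "(\<lambda>i. v (E i)) sums (\<Sum>c\<in>F. v c)"
    using F(1) by (auto simp: fin_disj_in_def intro: finite_family_as_sequence[OF ms, of F "\<lambda>c. c"])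
  then show ?thesis using that F ring_measure_decomp[OF ms F(1)] by simp
qed

lemma flatten_disjoint_families:
  fixes E :: "nat \<Rightarrow> nat \<Rightarrow> 'a set"
  assumes rows: "\<And>n. disjoint_family (E n)" and dj: "disjoint_family (\<lambda>n. \<Union>i. E n i)"
  shows "disjoint_family (\<lambda>m. E (fst (prod_decode m)) (snd (prod_decode m)))"
    and "(\<Union>m. E (fst (prod_decode m)) (snd (prod_decode m))) = (\<Union>n. \<Union>i. E n i)"
proof -
  show "disjoint_family (\<lambda>m. E (fst (prod_decode m)) (snd (prod_decode m)))"
    unfolding disjoint_family_on_def
  proof (intro ballI impI)
    fix m m' :: nat assume "m \<noteq> m'"
    obtain n i n' i' where p: "prod_decode m = (n, i)" "prod_decode m' = (n', i')" by fastforce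
    then have "(n, i) \<noteq> (n', i')" using \<open>m \<noteq> m'\<close> by (metis prod_decode_inverse)
    then have "E n i \<inter> E n' i' = {}"
    proof (cases "n = n'")
      case False
      then have "(\<Union>i. E n i) \<inter> (\<Union>i. E n' i) = {}" using dj by (auto simp: disjoint_family_on_def)
      then show ?thesis by blast
    qed (use rows[of n] in \<open>auto simp: disjoint_family_on_def\<close>)
    then show "E (fst (prod_decode m)) (snd (prod_decode m)) \<inter> E (fst (prod_decode m')) (snd (prod_decode m')) = {}"
      by (simp add: p)
  qed
  show "(\<Union>m. E (fst (prod_decode m)) (snd (prod_decode m))) = (\<Union>n. \<Union>i. E n i)"
  proof (intro equalityI subsetI)
    fix x assume "x \<in> (\<Union>n. \<Union>i. E n i)"
    then obtain n i where "x \<in> E n i" by blast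
    then have "x \<in> E (fst (prod_decode (prod_encode (n, i)))) (snd (prod_decode (prod_encode (n, i))))" by simp
    then show "x \<in> (\<Union>m. E (fst (prod_decode m)) (snd (prod_decode m)))" by blast
  qed blast
qed

text \<open>Countable additivity of the ring measure against a basic set: if \<open>a \<in> V\<close> is the
  disjoint union of ring sets \<open>D n\<close>, the sequences representing all \<open>D n\<close> are flattened into
  a single disjoint sequence in \<open>V\<close>, to which countable additivity of \<open>v\<close> applies.\<close>

lemma ring_measure_sums_basic:
  assumes ms: "measure_space_pr V v" and a: "a \<in> V" and D: "\<And>n. D n \<in> gen_ring V"
    and dj: "disjoint_family D" and un: "(\<Union>n. D n) = a"
  shows "(\<lambda>n. ring_measure V v (D n)) sums v a"
proof -
  have "\<forall>n. \<exists>E. range E \<subseteq> V \<and> disjoint_family E \<and> (\<Union>i. E i) = D n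
      \<and> (\<lambda>i. v (E i)) sums ring_measure V v (D n)"
    using gen_ring_as_sequence[OF ms D] by metis
  then obtain E where EV: "\<And>n. range (E n) \<subseteq> V" and Edj: "\<And>n. disjoint_family (E n)"
    and Eun: "\<And>n. (\<Union>i. E n i) = D n" and Esum: "\<And>n. (\<lambda>i. v (E n i)) sums ring_measure V v (D n)"
    by metis
  define C where "C m = E (fst (prod_decode m)) (snd (prod_decode m))" for m
  have EV': "E n i \<in> V" for n i using EV by blast
  have CV: "range C \<subseteq> V" using EV' by (auto simp: C_def)
  have "disjoint_family (\<lambda>n. \<Union>i. E n i)" using dj Eun by simp
  note flat = flatten_disjoint_families[OF Edj this, folded C_def]
  have Cdj: "disjoint_family C" by (rule flat(1))
  have "(\<Union>m. C m) = (\<Union>n. \<Union>i. E n i)" by (rule flat(2))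
  then have Cun: "(\<Union>m. C m) = a" using Eun un by simp
  have nonneg: "0 \<le> v (E n i)" for n i using EV' ms_nonneg[OF ms] by blast
  have "(\<Sum>m. ennreal (v (C m))) = ennreal (v a)"
    using ms_countably_additive[OF ms CV Cdj] Cun a CV ms_nonneg[OF ms]
    by (intro suminf_ennreal_eq) auto
  moreover have "(\<Sum>m. ennreal (v (C m))) = (\<Sum>n. ennreal (ring_measure V v (D n)))"
    unfolding C_def using nonneg Esum
    by (intro suminf_ennreal_2dimen[where f = "\<lambda>p. ennreal (v (E (fst p) (snd p)))"])
      (simp add: suminf_ennreal_eq[OF nonneg Esum])
  ultimately have "(\<lambda>n. ennreal (ring_measure V v (D n))) sums ennreal (v a)"
    using summable_sums[OF summableI, of "\<lambda>n. ennreal (ring_measure V v (D n))"] by simp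
  then show ?thesis using ring_measure_nonneg[OF ms D] ms_nonneg[OF ms a] by simp
qed

text \<open>Countable additivity on the generated ring: split the union over the pieces of a
  decomposition of it and apply the previous lemma to each piece.\<close>

lemma ring_measure_countably_additive:
  assumes ms: "measure_space_pr V v"
  shows "countably_additive (gen_ring V) (\<lambda>a. ennreal (ring_measure V v a))"
  unfolding countably_additive_def
proof (intro allI impI)
  fix B :: "nat \<Rightarrow> 'a set"
  assume B: "range B \<subseteq> gen_ring V" and dj: "disjoint_family B" and U: "\<Union>(range B) \<in> gen_ring V"
  interpret R: ring_of_sets UNIV "gen_ring V" by (rule ring_of_sets_gen_ring[OF ms_prering[OF ms]])
  obtain F where F: "fin_disj_in V F" "\<Union>(range B) = \<Union>F" using U by (auto simp: gen_ring_iff)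
  have finF: "finite F" and FV: "F \<subseteq> V" using F by (auto simp: fin_disj_in_def)
  have BF: "B n \<inter> a \<in> gen_ring V" if "a \<in> F" for n a
    by (intro R.Int) (use B FV that in \<open>auto intro: gen_ring_basic\<close>)
  have "(\<lambda>n. ring_measure V v (B n \<inter> a)) sums v a" if a: "a \<in> F" for a
  proof (rule ring_measure_sums_basic[OF ms])
    show "a \<in> V" "B n \<inter> a \<in> gen_ring V" for n using a FV BF by auto
    show "disjoint_family (\<lambda>n. B n \<inter> a)" using dj unfolding disjoint_family_on_def by auto
    show "(\<Union>n. B n \<inter> a) = a" using F(2) a by auto
  qed
  then have "(\<lambda>n. \<Sum>a\<in>F. ring_measure V v (B n \<inter> a)) sums (\<Sum>a\<in>F. v a)"
    by (rule sums_sum)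
  moreover have "(\<Sum>a\<in>F. ring_measure V v (B n \<inter> a)) = ring_measure V v (B n)" for n
  proof -
    have "disjoint_family_on (\<lambda>a. B n \<inter> a) F"
      using F(1) by (auto simp: fin_disj_in_def disjoint_family_on_def dest: disjointD)
    then have "ring_measure V v (\<Union>a\<in>F. B n \<inter> a) = (\<Sum>a\<in>F. ring_measure V v (B n \<inter> a))"
      using BF by (intro ring_measure_finite_UN[OF ms finF]) auto
    moreover have "(\<Union>a\<in>F. B n \<inter> a) = B n" using F(2) by auto
    ultimately show ?thesis by simp
  qed
  ultimately have "(\<lambda>n. ring_measure V v (B n)) sums ring_measure V v (\<Union>(range B))"
    using ring_measure_decomp[OF ms F(1)] F(2) by simp
  then have "(\<lambda>n. ennreal (ring_measure V v (B n))) sums ennreal (ring_measure V v (\<Union>(range B)))"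
    using ring_measure_nonneg[OF ms] B U by (subst sums_ennreal) auto
  then show "(\<Sum>i. ennreal (ring_measure V v (B i))) = ennreal (ring_measure V v (\<Union>(range B)))"
    by (rule sums_unique[symmetric])
qed

text \<open>A measure on the whole universe extending \<open>v\<close>; it is the bridge to the library's
  Lebesgue integration and dominated convergence.\<close>

definition extends_measure :: "'a set set \<Rightarrow> ('a set \<Rightarrow> real) \<Rightarrow> 'a measure \<Rightarrow> bool" where
  "extends_measure V v M \<longleftrightarrow> space M = UNIV \<and> V \<subseteq> sets M \<and> (\<forall>a\<in>V. emeasure M a = ennreal (v a))"

lemma extends_measureD:
  assumes "extends_measure V v M"
  shows "space M = UNIV" "V \<subseteq> sets M" "\<And>a. a \<in> V \<Longrightarrow> emeasure M a = ennreal (v a)"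
  using assms by (auto simp: extends_measure_def)

text \<open>Such a measure exists, by Caratheodory's theorem applied to the generated ring.\<close>

theorem extension_measure_exists:
  assumes ms: "measure_space_pr V v"
  obtains M where "extends_measure V v M"
proof -
  interpret R: ring_of_sets UNIV "gen_ring V" by (rule ring_of_sets_gen_ring[OF ms_prering[OF ms]])
  have "positive (gen_ring V) (\<lambda>a. ennreal (ring_measure V v a))"
    unfolding positive_def using ring_measure_basic[OF ms] ms_empty[OF ms] by simp
  then obtain mu where mu: "\<forall>s\<in>gen_ring V. mu s = ennreal (ring_measure V v s)"
    and msp: "measure_space UNIV (sigma_sets UNIV (gen_ring V)) mu"
    using R.caratheodory'[OF _ ring_measure_countably_additive[OF ms]] by blast
  define M where "M = measure_of UNIV (sigma_sets UNIV (gen_ring V)) mu"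
  have sa: "sigma_algebra UNIV (sigma_sets UNIV (gen_ring V))"
    using msp by (simp add: measure_space_def)
  have sets: "sets M = sigma_sets UNIV (gen_ring V)"
    unfolding M_def by (rule sigma_algebra.sets_measure_of_eq[OF sa])
  have "emeasure M a = ennreal (v a)" if a: "a \<in> V" for a
  proof -
    have "emeasure M a = mu a" unfolding M_def
      using msp a gen_ring_basic
      by (intro emeasure_measure_of_sigma[OF sa]) (auto simp: measure_space_def intro: sigma_sets.Basic)
    also have "\<dots> = ennreal (v a)" using mu gen_ring_basic[OF a] ring_measure_basic[OF ms a] by simp
    finally show ?thesis .
  qed
  moreover have "space M = UNIV" unfolding M_def by (simp add: space_measure_of_conv)
  moreover have "V \<subseteq> sets M" unfolding sets using gen_ring_basic by (auto intro: sigma_sets.Basic)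
  ultimately show ?thesis by (intro that) (auto simp: extends_measure_def)
qed

lemma null_set_in_null_sets:
  assumes ms: "measure_space_pr V v" and M: "extends_measure V v M" and N: "null_set V v N"
  obtains Z where "Z \<in> null_sets M" "N \<subseteq> Z"
proof -
  note MV = extends_measureD[OF M]
  have "\<forall>n::nat. \<exists>A :: nat \<Rightarrow> 'a set. range A \<subseteq> V \<and> N \<subseteq> \<Union>(range A) \<and>
      summable (\<lambda>t. v (A t)) \<and> (\<Sum>t. v (A t)) < 1 / Suc n"
    using N unfolding null_set_def by simp
  from choice[OF this] obtain A where A: "\<forall>n. range (A n) \<subseteq> V \<and> N \<subseteq> \<Union>(range (A n)) \<and>
      summable (\<lambda>t. v (A n t)) \<and> (\<Sum>t. v (A n t)) < 1 / Suc n" ..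
  then have AV: "\<And>n t. A n t \<in> V" and NA: "\<And>n. N \<subseteq> (\<Union>t. A n t)"
    and As: "\<And>n. summable (\<lambda>t. v (A n t))" and Al: "\<And>n. (\<Sum>t. v (A n t)) < 1 / Suc n"
    by blast+
  define Z where "Z = (\<Inter>n. \<Union>t. A n t)"
  have UM: "(\<Union>t. A n t) \<in> sets M" for n using AV MV(2) by blast
  have bound: "emeasure M Z \<le> ennreal (1 / Suc n)" for n
  proof -
    have "emeasure M Z \<le> emeasure M (\<Union>t. A n t)"
      using UM by (intro emeasure_mono) (auto simp: Z_def)
    also have "\<dots> \<le> (\<Sum>t. emeasure M (A n t))"
      using AV MV(2) by (intro emeasure_subadditive_countably) auto
    also have "\<dots> = ennreal (\<Sum>t. v (A n t))"
      using MV(3) AV As ms_nonneg[OF ms] by (simp add: suminf_ennreal2)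
    also have "\<dots> \<le> ennreal (1 / Suc n)" using Al[of n] by (intro ennreal_leI) simp
    finally show ?thesis .
  qed
  have "emeasure M Z \<le> 0"
  proof (rule ennreal_le_epsilon)
    fix e :: real assume "0 < e"
    then obtain n :: nat where "1 / Suc n < e" using nat_approx_posE by blast
    then show "emeasure M Z \<le> 0 + ennreal e"
      using bound[of n] by (simp add: ennreal_leI order_trans)
  qed
  moreover have "Z \<in> sets M" using UM by (auto simp: Z_def)
  moreover have "N \<subseteq> Z" using NA by (auto simp: Z_def)
  ultimately show ?thesis by (intro that) auto
qed

lemma AE_of_almost_everywhere:
  assumes ms: "measure_space_pr V v" and M: "extends_measure V v M" and P: "almost_everywhere V v P"
  shows "AE x in M. P x"
proof -
  obtain N where N: "null_set V v N" "\<And>x. x \<notin> N \<Longrightarrow> P x" using P unfolding almost_everywhere_def by blast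
  obtain Z where Z: "Z \<in> null_sets M" "N \<subseteq> Z" using null_set_in_null_sets[OF ms M N(1)] .
  show ?thesis by (rule AE_I'[OF Z(1)]) (use N(2) Z(2) in auto)
qed

text \<open>Simple functions are integrable for the extension measure, and their integral is the
  defining sum; in particular \<open>simple_integral\<close> does not depend on the representation.\<close>

lemma simple_rep_integral:
  fixes h :: "'a \<Rightarrow> real"
  assumes ms: "measure_space_pr V v" and M: "extends_measure V v M" and rep: "simple_rep V h k y A"
  shows "integrable M h" and "integral\<^sup>L M h = (\<Sum>i<k. v (A i) *\<^sub>R y i)"
proof -
  note MV = extends_measureD[OF M]
  have AV: "\<And>i. i < k \<Longrightarrow> A i \<in> V" and h: "h = (\<lambda>x. \<Sum>i<k. indicator (A i) x *\<^sub>R y i)"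
    using rep unfolding simple_rep_def by auto
  have ind: "integrable M (indicator (A i) :: 'a \<Rightarrow> real)" if "i < k" for i
    using AV[OF that] MV by (intro integrable_real_indicator) auto
  then show "integrable M h" unfolding h by (intro Bochner_Integration.integrable_sum) simp
  have "integral\<^sup>L M h = (\<Sum>i<k. integral\<^sup>L M (indicator (A i) :: 'a \<Rightarrow> real) *\<^sub>R y i)"
    unfolding h using ind by (simp add: Bochner_Integration.integral_sum integral_scaleR_left)
  also have "\<dots> = (\<Sum>i<k. v (A i) *\<^sub>R y i)"
    using AV MV ms_nonneg[OF ms] by (intro sum.cong) (auto simp: measure_def)
  finally show "integral\<^sup>L M h = (\<Sum>i<k. v (A i) *\<^sub>R y i)" .
qed

lemma simple_integral_eq:
  fixes h :: "'a \<Rightarrow> real"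
  assumes ms: "measure_space_pr V v" and M: "extends_measure V v M" and h: "h \<in> simple_funs V"
  shows "integrable M h" and "simple_integral V v h = integral\<^sup>L M h"
proof -
  obtain k y A where "simple_rep V h k y A" using h unfolding simple_funs_def by blast
  then show "integrable M h" by (rule simple_rep_integral(1)[OF ms M])
  have "\<exists>k y A. simple_rep V h k y A \<and> simple_integral V v h = (\<Sum>i<k. v (A i) *\<^sub>R y i)"
    unfolding simple_integral_def by (rule someI_ex) (use \<open>simple_rep V h k y A\<close> in blast)
  then show "simple_integral V v h = integral\<^sup>L M h" using simple_rep_integral(2)[OF ms M] by auto
qed

lemma simple_norm_eq:
  fixes h :: "'a \<Rightarrow> 'b::real_normed_vector"
  assumes "measure_space_pr V v" "extends_measure V v M" "h \<in> simple_funs V"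
  shows "integrable M (\<lambda>x. norm (h x))" and "simple_norm V v h = (\<integral>x. norm (h x) \<partial>M)"
  using simple_integral_eq[OF assms(1,2) simple_funs_norm[OF assms(3)]] unfolding simple_norm_def by auto

lemma simple_norm_rep:
  fixes h :: "'a \<Rightarrow> 'b::real_normed_vector"
  assumes ms: "measure_space_pr V v" and rep: "simple_rep V h k y A"
  shows "simple_norm V v h = (\<Sum>i<k. v (A i) * norm (y i))"
proof -
  obtain M where M: "extends_measure V v M" using extension_measure_exists[OF ms] .
  have "h \<in> simple_funs V" using rep unfolding simple_funs_def by blast
  with simple_norm_eq(2)[OF ms M this] show ?thesis
    using simple_rep_integral(2)[OF ms M simple_rep_norm[OF rep]] by simp
qed

lemma simple_norm_nonneg:
  fixes h :: "'a \<Rightarrow> 'b::real_normed_vector"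
  assumes ms: "measure_space_pr V v" and h: "h \<in> simple_funs V"
  shows "0 \<le> simple_norm V v h"
proof -
  obtain M where M: "extends_measure V v M" using extension_measure_exists[OF ms] .
  show ?thesis using simple_norm_eq(2)[OF ms M h] by simp
qed

lemma simple_chebyshev_cover:
  fixes h :: "'a \<Rightarrow> 'b::real_normed_vector"
  assumes ms: "measure_space_pr V v" and h: "h \<in> simple_funs V" and t: "0 < t"
  obtains B where "range B \<subseteq> V" "{x. t < norm (h x)} \<subseteq> (\<Union>i. B i)"
    "(\<Sum>i. ennreal (v (B i))) \<le> ennreal (simple_norm V v h / t)"
proof -
  obtain k y A where rep: "simple_rep V h k y A" using h unfolding simple_funs_def by blast
  have AV: "\<And>i. i < k \<Longrightarrow> A i \<in> V" using rep by (simp add: simple_rep_def)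
  define B where "B i = (if i < k \<and> t < norm (y i) then A i else {})" for i
  have BV: "range B \<subseteq> V" using AV ms_empty[OF ms] by (auto simp: B_def)
  have cover: "{x. t < norm (h x)} \<subseteq> (\<Union>i. B i)"
  proof
    fix x assume x: "x \<in> {x. t < norm (h x)}"
    then have "h x \<noteq> 0" using t by auto
    then obtain j where j: "j < k" "x \<in> A j" using simple_rep_outside[OF rep] by blast
    then have "t < norm (y j)" using x simple_rep_at[OF rep j] by simp
    then show "x \<in> (\<Union>i. B i)" using j by (auto simp: B_def)
  qed
  have vB: "v (B i) \<le> v (A i) * norm (y i) / t" if i: "i < k" for i
  proof (cases "t < norm (y i)")
    case True
    have "v (A i) * t \<le> v (A i) * norm (y i)"
      using True ms_nonneg[OF ms AV[OF i]] by (intro mult_left_mono) auto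
    then show ?thesis using True t i by (simp add: B_def field_simps)
  next
    case False
    then show ?thesis using ms_nonneg[OF ms AV[OF i]] t ms_empty(2)[OF ms] by (simp add: B_def)
  qed
  have "(\<Sum>i. ennreal (v (B i))) = (\<Sum>i<k. ennreal (v (B i)))"
    by (rule suminf_finite) (auto simp: B_def ms_empty(2)[OF ms])
  also have "\<dots> = ennreal (\<Sum>i<k. v (B i))" using BV ms_nonneg[OF ms] by (intro sum_ennreal) auto
  also have "\<dots> \<le> ennreal (\<Sum>i<k. v (A i) * norm (y i) / t)" using vB by (intro ennreal_leI sum_mono) auto
  also have "(\<Sum>i<k. v (A i) * norm (y i) / t) = simple_norm V v h / t"
    by (simp add: simple_norm_rep[OF ms rep] sum_divide_distrib)
  finally show ?thesis by (rule that[OF BV cover])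
qed

lemma null_setI_double_cover:
  assumes ms: "measure_space_pr V v"
    and cover: "\<And>\<epsilon>. 0 < \<epsilon> \<Longrightarrow> \<exists>B :: nat \<Rightarrow> nat \<Rightarrow> 'a set. (\<forall>i j. B i j \<in> V) \<and>
      N \<subseteq> (\<Union>i. \<Union>j. B i j) \<and> (\<Sum>i. \<Sum>j. ennreal (v (B i j))) < ennreal \<epsilon>"
  shows "null_set V v N"
  unfolding null_set_def
proof (intro allI impI)
  fix \<epsilon> :: real assume "0 < \<epsilon>"
  then obtain B where BV: "\<And>i j. B i j \<in> V" and NB: "N \<subseteq> (\<Union>i. \<Union>j. B i j)"
    and small: "(\<Sum>i. \<Sum>j. ennreal (v (B i j))) < ennreal \<epsilon>"
    using cover by blast
  define A where "A m = B (fst (prod_decode m)) (snd (prod_decode m))" for m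
  have nonneg: "0 \<le> v (A m)" for m using BV ms_nonneg[OF ms] by (simp add: A_def)
  have "(\<Sum>m. ennreal (v (A m))) = (\<Sum>i. \<Sum>j. ennreal (v (B i j)))"
    unfolding A_def by (rule suminf_ennreal_2dimen[where f = "\<lambda>p. ennreal (v (B (fst p) (snd p)))"]) simp
  then have sumA: "(\<Sum>m. ennreal (v (A m))) < ennreal \<epsilon>" using small by simp
  then have summ: "summable (\<lambda>m. v (A m))" using nonneg by (intro summable_suminf_not_top) auto
  then have "(\<Sum>m. v (A m)) < \<epsilon>"
    using sumA suminf_ennreal2[OF nonneg summ] suminf_nonneg[OF summ nonneg] by (simp add: ennreal_less_iff)
  moreover have "N \<subseteq> \<Union>(range A)"
  proof
    fix x assume "x \<in> N"
    then obtain i j where "x \<in> B i j" using NB by blast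
    then have "x \<in> A (prod_encode (i, j))" by (simp add: A_def)
    then show "x \<in> \<Union>(range A)" by blast
  qed
  moreover have "range A \<subseteq> V" using BV by (auto simp: A_def)
  ultimately show "\<exists>A. range A \<subseteq> V \<and> N \<subseteq> \<Union>(range A) \<and> summable (\<lambda>t. v (A t)) \<and> (\<Sum>t. v (A t)) < \<epsilon>"
    using summ by blast
qed

lemma basic_increments_simple:
  "basic_increments V v h \<Longrightarrow> h i \<in> simple_funs V"
  by (simp add: basic_increments_def)

lemma increment_chebyshev_cover:
  fixes h :: "'a \<Rightarrow> 'b::real_normed_vector"
  assumes ms: "measure_space_pr V v" and h: "h \<in> simple_funs V"
    and bound: "simple_norm V v h \<le> M0 / 4 ^ n"
  shows "\<exists>B. range B \<subseteq> V \<and> {x. (1/2) ^ n < norm (h x)} \<subseteq> (\<Union>j. B j) \<and>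
    (\<Sum>j. ennreal (v (B j))) \<le> ennreal (M0 / 2 ^ n)"
proof -
  have "simple_norm V v h / (1/2) ^ n = simple_norm V v h * 2 ^ n" by (simp add: power_one_over)
  also have "\<dots> \<le> M0 / 4 ^ n * 2 ^ n" using bound by (intro mult_right_mono) auto
  also have "(4::real) ^ n = 2 ^ n * 2 ^ n" by (simp flip: power_mult_distrib)
  finally have le: "simple_norm V v h / (1/2) ^ n \<le> M0 / 2 ^ n" by simp
  obtain B where BV: "range B \<subseteq> V" and cover: "{x. (1/2) ^ n < norm (h x)} \<subseteq> (\<Union>j. B j)"
      and mass: "(\<Sum>j. ennreal (v (B j))) \<le> ennreal (simple_norm V v h / (1/2) ^ n)"
    by (rule simple_chebyshev_cover[OF ms h, of "(1/2) ^ n"]) auto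
  show ?thesis using BV cover order_trans[OF mass ennreal_leI[OF le]] by blast
qed

text \<open>The increments of a basic sequence are absolutely summable almost everywhere: outside
  the covers of the sets \<open>{\<parallel>h n\<parallel> > 2\<^sup>-\<^sup>n}\<close>, \<open>n \<ge> N\<close>, whose total mass is at most \<open>2 M / 2\<^sup>N\<close>,
  the increments are dominated by a geometric series.\<close>

lemma basic_increments_summable_ae:
  fixes h :: "nat \<Rightarrow> 'a \<Rightarrow> 'b::real_normed_vector"
  assumes ms: "measure_space_pr V v" and bi: "basic_increments V v h"
  shows "null_set V v {x. \<not> summable (\<lambda>i. norm (h i x))}"
proof (rule null_setI_double_cover[OF ms])
  note hS = basic_increments_simple[OF bi]
  obtain M0 where M0: "\<And>n. simple_norm V v (h n) \<le> M0 / 4 ^ n" using bi unfolding basic_increments_def by auto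
  have M0_nonneg: "0 \<le> M0" using M0[of 0] simple_norm_nonneg[OF ms hS[of 0]] by simp
  fix \<epsilon> :: real assume \<epsilon>: "0 < \<epsilon>"
  obtain N :: nat where "2 * M0 / \<epsilon> < 2 ^ N" using real_arch_pow[of 2 "2 * M0 / \<epsilon>"] by auto
  then have N: "2 * M0 / 2 ^ N < \<epsilon>" using \<epsilon> by (simp add: field_simps)
  have "\<forall>i. \<exists>B. range B \<subseteq> V \<and> {x. (1/2) ^ (i + N) < norm (h (i + N) x)} \<subseteq> (\<Union>j. B j) \<and>
      (\<Sum>j. ennreal (v (B j))) \<le> ennreal (M0 / 2 ^ (i + N))"
    by (intro allI increment_chebyshev_cover[OF ms hS M0])
  then obtain B where BV: "\<And>i. range (B i) \<subseteq> V"
    and Bcover: "\<And>i. {x. (1/2) ^ (i + N) < norm (h (i + N) x)} \<subseteq> (\<Union>j. B i j)"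
    and Bmass: "\<And>i. (\<Sum>j. ennreal (v (B i j))) \<le> ennreal (M0 / 2 ^ (i + N))"
    by metis
  have "{x. \<not> summable (\<lambda>i. norm (h i x))} \<subseteq> (\<Union>i. \<Union>j. B i j)"
  proof (rule subsetI, rule ccontr)
    fix x assume x: "x \<in> {x. \<not> summable (\<lambda>i. norm (h i x))}" and nx: "x \<notin> (\<Union>i. \<Union>j. B i j)"
    have "norm (h (i + N) x) \<le> (1/2) ^ (i + N)" for i
    proof (rule ccontr)
      assume "\<not> norm (h (i + N) x) \<le> (1/2) ^ (i + N)"
      then have "x \<in> (\<Union>j. B i j)" by (intro subsetD[OF Bcover[of i]]) (simp add: not_le)
      then show False using nx by blast
    qed
    then have "norm (norm (h n x)) \<le> (1/2) ^ n" if "N \<le> n" for n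
      using that le_add_diff_inverse2[OF that] by (metis norm_ge_zero real_norm_def abs_of_nonneg)
    then have "summable (\<lambda>i. norm (h i x))"
      by (intro summable_comparison_test'[OF summable_geometric[of "1/2"]]) auto
    then show False using x by simp
  qed
  moreover have "(\<Sum>i. \<Sum>j. ennreal (v (B i j))) < ennreal \<epsilon>"
  proof -
    have geometric: "(\<lambda>i. M0 / 2 ^ (i + N)) sums (2 * M0 / 2 ^ N)"
      using sums_mult[OF geometric_sums[of "1/2::real"], of "M0 / 2 ^ N"]
      by (simp add: power_add power_one_over field_simps)
    have "(\<Sum>i. \<Sum>j. ennreal (v (B i j))) \<le> (\<Sum>i. ennreal (M0 / 2 ^ (i + N)))"
      using Bmass by (intro suminf_le summableI)
    also have "\<dots> = ennreal (2 * M0 / 2 ^ N)"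
      using M0_nonneg by (intro suminf_ennreal_eq geometric) auto
    also have "\<dots> < ennreal \<epsilon>" using N \<epsilon> by (simp add: ennreal_lessI)
    finally show ?thesis .
  qed
  ultimately show "\<exists>B :: nat \<Rightarrow> nat \<Rightarrow> 'a set. (\<forall>i j. B i j \<in> V) \<and>
      {x. \<not> summable (\<lambda>i. norm (h i x))} \<subseteq> (\<Union>i. \<Union>j. B i j) \<and> (\<Sum>i. \<Sum>j. ennreal (v (B i j))) < ennreal \<epsilon>"
    using BV by blast
qed

lemma norm_partial_sum_le_suminf:
  fixes h :: "nat \<Rightarrow> 'b::real_normed_vector"
  assumes "summable (\<lambda>i. norm (h i))"
  shows "norm (\<Sum>i\<le>n. h i) \<le> (\<Sum>i. norm (h i))"
proof -
  have "norm (\<Sum>i\<le>n. h i) \<le> (\<Sum>i\<le>n. norm (h i))" by (rule norm_sum)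
  also have "\<dots> \<le> (\<Sum>i. norm (h i))" using assms by (intro sum_le_suminf) auto
  finally show ?thesis .
qed

lemma norm_limit_le_suminf:
  fixes h :: "nat \<Rightarrow> 'b::real_normed_vector"
  assumes "(\<lambda>n. \<Sum>i\<le>n. h i) \<longlonglongrightarrow> L" "summable (\<lambda>i. norm (h i))"
  shows "norm L \<le> (\<Sum>i. norm (h i))"
  by (rule LIMSEQ_le_const2[OF tendsto_norm[OF assms(1)]])
    (use norm_partial_sum_le_suminf[OF assms(2)] in auto)

text \<open>The majorant \<open>\<Sum>\<^sub>i \<parallel>h i x\<parallel>\<close> of a basic sequence (set to 0 where the series diverges,
  a null set).\<close>

definition majorant :: "(nat \<Rightarrow> 'a \<Rightarrow> 'b::real_normed_vector) \<Rightarrow> 'a \<Rightarrow> real" where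
  "majorant h x = (if summable (\<lambda>i. norm (h i x)) then \<Sum>i. norm (h i x) else 0)"

text \<open>The majorant lies in \<open>G\<close>: the norms \<open>\<parallel>h i\<parallel>\<close> again form a basic sequence, whose
  increasing partial sums converge to the majorant off a null set.\<close>

lemma majorant_in_G_set:
  fixes h :: "nat \<Rightarrow> 'a \<Rightarrow> 'b::real_normed_vector"
  assumes ms: "measure_space_pr V v" and bi: "basic_increments V v h"
  shows "majorant h \<in> G_set V v"
proof -
  define Z where "Z = {x. \<not> summable (\<lambda>i. norm (h i x))}"
  have Z: "null_set V v Z" unfolding Z_def by (rule basic_increments_summable_ae[OF ms bi])
  define k where "k i x = norm (h i x)" for i x
  have kS: "k i \<in> simple_funs V" for i
    unfolding k_def by (rule simple_funs_norm[OF basic_increments_simple[OF bi]])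
  have "basic_increments V v k"
    using bi kS unfolding basic_increments_def k_def simple_norm_def by simp
  moreover have conv: "(\<lambda>n. \<Sum>i\<le>n. k i x) \<longlonglongrightarrow> majorant h x" if "x \<notin> Z" for x
    using that summable_LIMSEQ' unfolding Z_def k_def majorant_def by auto
  ultimately have "majorant h \<in> L_space V v"
    unfolding L_space_def almost_everywhere_def using Z by blast
  moreover have "0 \<le> majorant h x" for x by (auto simp: majorant_def intro: suminf_nonneg)
  moreover have "(\<lambda>x. \<Sum>i\<le>n. k i x) \<in> simple_funs V" for n
    by (rule simple_funs_partial_sum[OF ms_prering[OF ms] kS])
  moreover have "(\<Sum>i\<le>n. k i x) \<le> (\<Sum>i\<le>Suc n. k i x)" for n x by (simp add: k_def)
  ultimately show ?thesis
    unfolding G_set_def almost_everywhere_def using Z conv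
    by (intro CollectI conjI exI[of _ "\<lambda>n x. \<Sum>i\<le>n. k i x"]) blast+
qed

text \<open>Every function in \<open>L\<close> is dominated almost everywhere by an integrable function of the
  extension measure, namely the majorant of a basic sequence converging to it.\<close>

lemma L_space_integrable_majorant:
  fixes f :: "'a \<Rightarrow> 'b::real_normed_vector"
  assumes ms: "measure_space_pr V v" and M: "extends_measure V v M" and f: "f \<in> L_space V v"
  obtains H where "integrable M H" "AE x in M. norm (f x) \<le> H x"
proof -
  obtain h where bi: "basic_increments V v h"
    and conv: "almost_everywhere V v (\<lambda>x. (\<lambda>n. \<Sum>i\<le>n. h i x) \<longlonglongrightarrow> f x)"
    using f unfolding L_space_def by blast
  note hS = basic_increments_simple[OF bi]
  obtain M0 where M0: "\<And>n. simple_norm V v (h n) \<le> M0 / 4 ^ n" using bi unfolding basic_increments_def by auto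
  have summ: "AE x in M. summable (\<lambda>i. norm (h i x))"
    using basic_increments_summable_ae[OF ms bi]
    by (intro AE_of_almost_everywhere[OF ms M]) (auto simp: almost_everywhere_def)
  have "integrable M (\<lambda>x. \<Sum>i. norm (h i x))"
  proof (rule integrable_suminf)
    show "integrable M (\<lambda>x. norm (h i x))" for i by (rule simple_norm_eq(1)[OF ms M hS])
    show "AE x in M. summable (\<lambda>i. norm (norm (h i x)))" using summ by simp
    have "summable (\<lambda>i. simple_norm V v (h i))"
    proof (rule summable_comparison_test'[where g = "\<lambda>i. M0 * (1/4) ^ i" and N = 0])
      show "summable (\<lambda>i. M0 * (1/4) ^ i)" by (intro summable_mult summable_geometric) simp
      show "norm (simple_norm V v (h i)) \<le> M0 * (1/4) ^ i" for i
        using M0[of i] simple_norm_nonneg[OF ms hS[of i]] by (simp add: power_one_over)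
    qed
    then show "summable (\<lambda>i. \<integral>x. norm (norm (h i x)) \<partial>M)"
      using simple_norm_eq(2)[OF ms M hS] by simp
  qed
  moreover have "AE x in M. norm (f x) \<le> (\<Sum>i. norm (h i x))"
    using AE_of_almost_everywhere[OF ms M conv] summ
    by eventually_elim (rule norm_limit_le_suminf)
  ultimately show ?thesis by (rule that)
qed

text \<open>First direction: the partial sums of a basic sequence are dominated by its majorant.\<close>

lemma L_space_imp_dominated_approximation:
  fixes f :: "'a \<Rightarrow> 'b::real_normed_vector"
  assumes ms: "measure_space_pr V v" and f: "f \<in> L_space V v"
  shows "\<exists>(s :: nat \<Rightarrow> 'a \<Rightarrow> 'b) g. (\<forall>n. s n \<in> simple_funs V) \<and> g \<in> G_set V v \<and>
    almost_everywhere V v (\<lambda>x. (\<lambda>n. s n x) \<longlonglongrightarrow> f x) \<and>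
    (\<forall>n. almost_everywhere V v (\<lambda>x. norm (s n x) \<le> g x))"
proof -
  obtain h where bi: "basic_increments V v h"
    and conv: "almost_everywhere V v (\<lambda>x. (\<lambda>n. \<Sum>i\<le>n. h i x) \<longlonglongrightarrow> f x)"
    using f unfolding L_space_def by blast
  define Z where "Z = {x. \<not> summable (\<lambda>i. norm (h i x))}"
  have Z: "null_set V v Z" unfolding Z_def by (rule basic_increments_summable_ae[OF ms bi])
  have "norm (\<Sum>i\<le>n. h i x) \<le> majorant h x" if "x \<notin> Z" for n x
    using that norm_partial_sum_le_suminf[of "\<lambda>i. h i x"] unfolding Z_def majorant_def by auto
  then have "almost_everywhere V v (\<lambda>x. norm (\<Sum>i\<le>n. h i x) \<le> majorant h x)" for n
    unfolding almost_everywhere_def using Z by blast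
  then show ?thesis
    using simple_funs_partial_sum[OF ms_prering[OF ms] basic_increments_simple[OF bi]]
      majorant_in_G_set[OF ms bi] conv
    by (intro exI[of _ "\<lambda>n x. \<Sum>i\<le>n. h i x"] exI[of _ "majorant h"]) auto
qed

lemma LIMSEQ_reindex_ge:
  fixes X :: "nat \<Rightarrow> 'b::topological_space"
  assumes X: "X \<longlonglongrightarrow> L" and p: "\<And>i. i \<le> p i"
  shows "(\<lambda>i. X (p i)) \<longlonglongrightarrow> L"
proof -
  have "filterlim p at_top sequentially"
    by (rule filterlim_at_top_mono[OF filterlim_ident]) (use p in auto)
  then show ?thesis by (rule filterlim_compose[OF X])
qed

lemma dominated_simple_seq_distance_tendsto_0:
  fixes s :: "nat \<Rightarrow> 'a \<Rightarrow> 'b::real_normed_vector"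
  assumes ms: "measure_space_pr V v" and M: "extends_measure V v M" and sS: "\<And>n. s n \<in> simple_funs V"
    and H: "integrable M H" and dom: "AE x in M. \<forall>n. norm (s n x) \<le> H x"
    and conv: "AE x in M. (\<lambda>n. s n x) \<longlonglongrightarrow> f x"
    and p: "\<And>i. i \<le> p i" and q: "\<And>i. i \<le> q i"
  shows "(\<lambda>i. simple_norm V v (\<lambda>x. s (p i) x - s (q i) x)) \<longlonglongrightarrow> 0"
proof -
  define d where "d i x = norm (s (p i) x - s (q i) x)" for i x
  have d_simple: "(\<lambda>x. s (p i) x - s (q i) x) \<in> simple_funs V" for i
    by (rule simple_funs_diff[OF ms_prering[OF ms] sS sS])
  have "(\<lambda>i. integral\<^sup>L M (d i)) \<longlonglongrightarrow> integral\<^sup>L M (\<lambda>x. 0::real)"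
  proof (rule integral_dominated_convergence[where w = "\<lambda>x. 2 * H x"])
    show "d i \<in> borel_measurable M" for i
      using simple_norm_eq(1)[OF ms M d_simple] unfolding d_def by auto
    show "AE x in M. (\<lambda>i. d i x) \<longlonglongrightarrow> 0"
      using conv
    proof eventually_elim
      case (elim x)
      have "(\<lambda>i. s (p i) x) \<longlonglongrightarrow> f x" "(\<lambda>i. s (q i) x) \<longlonglongrightarrow> f x"
        using LIMSEQ_reindex_ge[OF elim] p q by blast+
      from tendsto_norm[OF tendsto_diff[OF this]] show ?case by (simp add: d_def)
    qed
    show "AE x in M. norm (d i x) \<le> 2 * H x" for i
      using dom
    proof eventually_elim
      case (elim x)
      have "d i x \<le> norm (s (p i) x) + norm (s (q i) x)" unfolding d_def by (rule norm_triangle_ineq4)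
      also have "\<dots> \<le> 2 * H x" using elim[rule_format, of "p i"] elim[rule_format, of "q i"] by simp
      finally show ?case by (simp add: d_def)
    qed
  qed (use H in simp_all)
  moreover have "integral\<^sup>L M (d i) = simple_norm V v (\<lambda>x. s (p i) x - s (q i) x)" for i
    using simple_norm_eq(2)[OF ms M d_simple] unfolding d_def by simp
  ultimately show ?thesis by simp
qed

lemma dominated_simple_seq_cauchy:
  fixes s :: "nat \<Rightarrow> 'a \<Rightarrow> 'b::real_normed_vector"
  assumes ms: "measure_space_pr V v" and M: "extends_measure V v M" and sS: "\<And>n. s n \<in> simple_funs V"
    and H: "integrable M H" and dom: "AE x in M. \<forall>n. norm (s n x) \<le> H x"
    and conv: "AE x in M. (\<lambda>n. s n x) \<longlonglongrightarrow> f x" and e: "0 < e"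
  shows "\<exists>N. \<forall>n\<ge>N. \<forall>m\<ge>N. simple_norm V v (\<lambda>x. s n x - s m x) < e"
proof (rule ccontr)
  assume "\<not> ?thesis"
  then have "\<forall>N. \<exists>n m. N \<le> n \<and> N \<le> m \<and> e \<le> simple_norm V v (\<lambda>x. s n x - s m x)"
    by (auto simp: not_less)
  then obtain p q where pq: "\<And>N. N \<le> p N" "\<And>N. N \<le> q N"
    and far: "\<And>N. e \<le> simple_norm V v (\<lambda>x. s (p N) x - s (q N) x)"
    by metis
  have "eventually (\<lambda>i. simple_norm V v (\<lambda>x. s (p i) x - s (q i) x) < e) sequentially"
    using dominated_simple_seq_distance_tendsto_0[OF ms M sS H dom conv pq] e
    by (auto intro: order_tendstoD(2))
  then show False using far by (auto simp: eventually_sequentially not_less[symmetric])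
qed

text \<open>A sequence of simple functions that is Cauchy for \<open>simple_norm\<close> and converges almost
  everywhere to \<open>f\<close> has a subsequence whose increments form a basic sequence; hence
  \<open>f \<in> L\<close>.\<close>

lemma simple_cauchy_ae_limit_in_L_space:
  fixes s :: "nat \<Rightarrow> 'a \<Rightarrow> 'b::real_normed_vector"
  assumes pr: "prering V" and sS: "\<And>n. s n \<in> simple_funs V"
    and cauchy: "\<And>e. 0 < e \<Longrightarrow> \<exists>N. \<forall>n\<ge>N. \<forall>m\<ge>N. simple_norm V v (\<lambda>x. s n x - s m x) < e"
    and conv: "almost_everywhere V v (\<lambda>x. (\<lambda>n. s n x) \<longlonglongrightarrow> f x)"
  shows "f \<in> L_space V v"
proof -
  have "\<forall>j::nat. \<exists>N. \<forall>n\<ge>N. \<forall>m\<ge>N. simple_norm V v (\<lambda>x. s n x - s m x) < 1 / 4 ^ j"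
    using cauchy by simp
  then obtain N where N: "\<And>j n m. N j \<le> n \<Longrightarrow> N j \<le> m \<Longrightarrow> simple_norm V v (\<lambda>x. s n x - s m x) < 1 / 4 ^ j"
    by metis
  define r where "r j = (\<Sum>i\<le>j. N i) + j" for j
  have r_N: "N j \<le> r j" for j unfolding r_def by (simp add: member_le_sum trans_le_add1)
  have r_mono: "strict_mono r" unfolding strict_mono_Suc_iff r_def by simp
  define d where "d j = (case j of 0 \<Rightarrow> s (r 0) | Suc i \<Rightarrow> (\<lambda>x. s (r (Suc i)) x - s (r i) x))" for j
  have d_simple: "d j \<in> simple_funs V" for j
    using sS simple_funs_diff[OF pr sS sS] by (cases j) (auto simp: d_def)
  have partial_sum: "(\<Sum>i\<le>j. d i x) = s (r j) x" for j x
    by (induction j) (auto simp: d_def)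
  have "simple_norm V v (d j) \<le> max 4 (simple_norm V v (d 0)) / 4 ^ j" for j
  proof (cases j)
    case (Suc i)
    have "simple_norm V v (d j) < 1 / 4 ^ i"
      using N[of i "r (Suc i)" "r i"] r_N[of i] strict_mono_less_eq[OF r_mono, of i "Suc i"] Suc
      by (simp add: d_def)
    also have "\<dots> = 4 / 4 ^ j" using Suc by simp
    also have "\<dots> \<le> max 4 (simple_norm V v (d 0)) / 4 ^ j" by (intro divide_right_mono) auto
    finally show ?thesis by simp
  qed simp
  then have "basic_increments V v d" using d_simple unfolding basic_increments_def by blast
  moreover have "almost_everywhere V v (\<lambda>x. (\<lambda>j. \<Sum>i\<le>j. d i x) \<longlonglongrightarrow> f x)"
    using conv LIMSEQ_subseq_LIMSEQ[OF _ r_mono] unfolding almost_everywhere_def partial_sum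
    by (auto simp: comp_def)
  ultimately show ?thesis unfolding L_space_def by blast
qed

lemma dominated_approximation_imp_L_space:
  fixes f :: "'a \<Rightarrow> 'b::real_normed_vector"
  assumes ms: "measure_space_pr V v" and sS: "\<And>n. s n \<in> simple_funs V" and g: "g \<in> G_set V v"
    and conv: "almost_everywhere V v (\<lambda>x. (\<lambda>n. s n x) \<longlonglongrightarrow> f x)"
    and bound: "\<And>n. almost_everywhere V v (\<lambda>x. norm (s n x) \<le> g x)"
  shows "f \<in> L_space V v"
proof -
  obtain M where M: "extends_measure V v M" using extension_measure_exists[OF ms] .
  have "g \<in> L_space V v" using g unfolding G_set_def by blast
  then obtain H where H: "integrable M H" "AE x in M. norm (g x) \<le> H x"
    using L_space_integrable_majorant[OF ms M] by blast
  have "AE x in M. \<forall>n. norm (s n x) \<le> g x"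
    unfolding AE_all_countable using AE_of_almost_everywhere[OF ms M bound] by blast
  then have dom: "AE x in M. \<forall>n. norm (s n x) \<le> H x"
    using H(2) by eventually_elim (auto intro: order_trans)
  show ?thesis
    using dominated_simple_seq_cauchy[OF ms M sS H(1) dom AE_of_almost_everywhere[OF ms M conv]]
    by (rule simple_cauchy_ae_limit_in_L_space[OF ms_prering[OF ms] sS _ conv])
qed

theorem mainTheorem6:
  fixes V :: "'a set set" and v :: "'a set \<Rightarrow> real" and f :: "'a \<Rightarrow> 'b::banach"
  assumes "measure_space_pr V v"
  shows "f \<in> L_space V v \<longleftrightarrow>
    (\<exists>(s :: nat \<Rightarrow> 'a \<Rightarrow> 'b) g. (\<forall>n. s n \<in> simple_funs V) \<and> g \<in> G_set V v \<and>
       almost_everywhere V v (\<lambda>x. (\<lambda>n. s n x) \<longlonglongrightarrow> f x) \<and>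
       (\<forall>n. almost_everywhere V v (\<lambda>x. norm (s n x) \<le> g x)))"
  using L_space_imp_dominated_approximation[OF assms] dominated_approximation_imp_L_space[OF assms]
  by blast

end
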